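(* Let $k\ge2$, $n\ge1$ be integers, let $\bar{\mathcal{P}}\in\mathbb{R}^{[k,n]}$ be a columnwise-substochastic tensor, $\alpha\in[0,1)$, and let $\mathbf{v}\in\mathbb{R}^n$ be a positive stochastic vector. Then every nonnegative solution $\mathbf{y}_*$ of the MLPPR system $(\mathbf{e}^T\mathbf{y})^{k-2}\mathbf{y}-\alpha\bar{\mathcal{P}}\mathbf{y}^{k-1}=\mathbf{v}$ (equivalently, every fixed point $\mathbf{y}_*=\Phi(\mathbf{y}_* )$ in $\Delta$ of the map $\Phi(\mathbf{y}):=(1+\alpha\mathbf{e}^T(\bar{\mathcal{P}}\mathbf{y}^{k-1}))^{-\frac{k-2}{k-1}}(\mathbf{v}+\alpha\bar{\mathcal{P}}\mathbf{y}^{k-1})$) is a positive vector.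
   Context: For $\mathcal{P}\in\mathbb{R}^{[k,n]}$ (real tensors of order $k$, dimension $n$) and $\mathbf{y}\in\mathbb{R}^n$, $(\mathcal{P}\mathbf{y}^{k-1})_i=\sum_{i_2,\dots,i_k}p_{i i_2\dots i_k}y_{i_2}\cdots y_{i_k}$. $\bar{\mathcal{P}}$ is columnwise-substochastic if its entries are nonnegative and $\sum_{i}\bar p_{i i_2\dots i_k}\le1$ for all $i_2,\dots,i_k$. $\mathbf{e}$ is the all-ones vector; a stochastic vector is nonnegative with entries summing to $1$. $\Delta:=\{\mathbf{y}\in\mathbb{R}^n_+:\mathbf{e}^T\mathbf{y}\le(1-\alpha)^{-\frac{1}{k-1}}\}$. *)

theory Defs
  imports Complex_Main
begin

text \<open>A real tensor of order k and dimension n is modelled as a function on index lists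
  (i1,...,ik) (as a list of length k, entries < n). Vectors in R^n are functions
  nat => real, only the entries with index < n being relevant.\<close>

type_synonym tensor = "nat list \<Rightarrow> real"

definition idx_lists :: "nat \<Rightarrow> nat \<Rightarrow> nat list set" where
  "idx_lists m n = {js. length js = m \<and> set js \<subseteq> {..<n}}"

definition tensor_apply :: "nat \<Rightarrow> nat \<Rightarrow> tensor \<Rightarrow> (nat \<Rightarrow> real) \<Rightarrow> nat \<Rightarrow> real" where
  "tensor_apply k n P y i = (\<Sum>js\<in>idx_lists (k - 1) n. P (i # js) * prod_list (map y js))"

definition col_substochastic :: "nat \<Rightarrow> nat \<Rightarrow> tensor \<Rightarrow> bool" where
  "col_substochastic k n P \<longleftrightarrow>
     (\<forall>is\<in>idx_lists k n. 0 \<le> P is) \<and>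
     (\<forall>js\<in>idx_lists (k - 1) n. (\<Sum>i<n. P (i # js)) \<le> 1)"

definition stochastic_vec :: "nat \<Rightarrow> (nat \<Rightarrow> real) \<Rightarrow> bool" where
  "stochastic_vec n v \<longleftrightarrow> (\<forall>i<n. 0 \<le> v i) \<and> (\<Sum>i<n. v i) = 1"

definition esum :: "nat \<Rightarrow> (nat \<Rightarrow> real) \<Rightarrow> real" where
  "esum n y = (\<Sum>i<n. y i)"

definition Delta :: "nat \<Rightarrow> nat \<Rightarrow> real \<Rightarrow> (nat \<Rightarrow> real) set" where
  "Delta k n \<alpha> = {y. (\<forall>i<n. 0 \<le> y i) \<and> esum n y \<le> (1 - \<alpha>) powr (- 1 / (real k - 1))}"

definition Phi :: "nat \<Rightarrow> nat \<Rightarrow> real \<Rightarrow> tensor \<Rightarrow> (nat \<Rightarrow> real) \<Rightarrow> (nat \<Rightarrow> real) \<Rightarrow> nat \<Rightarrow> real" where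
  "Phi k n \<alpha> P v y i =
     (1 + \<alpha> * esum n (tensor_apply k n P y)) powr (- (real k - 2) / (real k - 1))
       * (v i + \<alpha> * tensor_apply k n P y i)"

end

theory Submission
  imports Defs
begin

text \<open>For y \<ge> 0 the vector P y^(k-1) is nonnegative, so the i-th component of the right-hand
  side v + \<alpha> P y^(k-1) is at least v_i > 0. In the MLPPR system this right-hand side equals
  (e^T y)^(k-2) y_i, and in the fixed-point equation y_i is a positive multiple of it; either
  way y_i \<ge> 0 cannot vanish.\<close>

lemma tensor_apply_nonneg:
  assumes "k \<ge> 1" "\<forall>is\<in>idx_lists k n. 0 \<le> P is" "\<forall>j<n. 0 \<le> y j" "i < n"
  shows "0 \<le> tensor_apply k n P y i"
  unfolding tensor_apply_def
proof (rule sum_nonneg)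
  fix js assume js: "js \<in> idx_lists (k - 1) n"
  have "i # js \<in> idx_lists k n" using js assms(1,4) by (auto simp: idx_lists_def)
  hence "0 \<le> P (i # js)" using assms(2) by blast
  moreover have "0 \<le> prod_list (map y js)"
    using js assms(3) by (intro prod_list_nonneg) (auto simp: idx_lists_def)
  ultimately show "0 \<le> P (i # js) * prod_list (map y js)" by simp
qed

lemma esum_nonneg: "\<forall>i<n. 0 \<le> y i \<Longrightarrow> 0 \<le> esum n y"
  unfolding esum_def by (auto intro: sum_nonneg)

lemma pagerank_rhs_pos:
  assumes "k \<ge> 1" "\<forall>is\<in>idx_lists k n. 0 \<le> P is" "\<forall>j<n. 0 \<le> y j"
    and "0 \<le> \<alpha>" "0 < v i" "i < n"
  shows "0 < v i + \<alpha> * tensor_apply k n P y i"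
  using tensor_apply_nonneg[OF assms(1-3,6)] assms(4,5) by (simp add: add_pos_nonneg)

lemma MLPPR_solution_pos:
  assumes "k \<ge> 1" "\<forall>is\<in>idx_lists k n. 0 \<le> P is" "\<forall>j<n. 0 \<le> y j"
    and "0 \<le> \<alpha>" "0 < v i" "i < n"
    and "esum n y ^ (k - 2) * y i - \<alpha> * tensor_apply k n P y i = v i"
  shows "0 < y i"
proof -
  have "0 < v i + \<alpha> * tensor_apply k n P y i" using assms(1-6) by (rule pagerank_rhs_pos)
  also have "\<dots> = esum n y ^ (k - 2) * y i" using assms(7) by simp
  finally have "0 < esum n y ^ (k - 2) * y i" .
  with assms(3,6) show ?thesis by (metis less_eq_real_def mult_zero_right)
qed

lemma Phi_pos:
  assumes "k \<ge> 1" "\<forall>is\<in>idx_lists k n. 0 \<le> P is" "\<forall>j<n. 0 \<le> y j"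
    and "0 \<le> \<alpha>" "0 < v i" "i < n"
  shows "0 < Phi k n \<alpha> P v y i"
proof -
  have "0 \<le> esum n (tensor_apply k n P y)"
    using tensor_apply_nonneg[OF assms(1-3)] by (intro esum_nonneg) blast
  hence "0 < 1 + \<alpha> * esum n (tensor_apply k n P y)"
    using assms(4) by (simp add: add_pos_nonneg)
  moreover have "0 < v i + \<alpha> * tensor_apply k n P y i" using assms by (rule pagerank_rhs_pos)
  ultimately show ?thesis unfolding Phi_def by simp
qed

theorem corollary3p7:
  fixes k n :: nat and P :: tensor and \<alpha> :: real and v :: "nat \<Rightarrow> real"
  assumes "k \<ge> 2" and "n \<ge> 1"
    and "col_substochastic k n P"
    and "0 \<le> \<alpha>" and "\<alpha> < 1"
    and "stochastic_vec n v" and "\<forall>i<n. 0 < v i"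
  shows "(\<forall>y. (\<forall>i<n. 0 \<le> y i) \<and>
              (\<forall>i<n. esum n y ^ (k - 2) * y i - \<alpha> * tensor_apply k n P y i = v i)
              \<longrightarrow> (\<forall>i<n. 0 < y i))
       \<and> (\<forall>y. y \<in> Delta k n \<alpha> \<and> (\<forall>i<n. y i = Phi k n \<alpha> P v y i)
              \<longrightarrow> (\<forall>i<n. 0 < y i))"
proof -
  have k: "k \<ge> 1" using assms(1) by simp
  have P: "\<forall>is\<in>idx_lists k n. 0 \<le> P is"
    using assms(3) by (simp add: col_substochastic_def)
  show ?thesis
  proof (intro conjI allI impI)
    fix y i assume "(\<forall>i<n. 0 \<le> y i) \<and>
        (\<forall>i<n. esum n y ^ (k - 2) * y i - \<alpha> * tensor_apply k n P y i = v i)" "i < n"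
    then show "0 < y i" using MLPPR_solution_pos[OF k P] assms(4,7) by blast
  next
    fix y i assume y: "y \<in> Delta k n \<alpha> \<and> (\<forall>i<n. y i = Phi k n \<alpha> P v y i)" and i: "i < n"
    have "\<forall>j<n. 0 \<le> y j" using y unfolding Delta_def by blast
    with Phi_pos[OF k P] assms(4,7) i have "0 < Phi k n \<alpha> P v y i" by blast
    with y i show "0 < y i" by simp
  qed
qed

end
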